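(* Consider the SBCM on the path graph $P_n$ ($n\ge1$) with nodes $1,\ldots,n+2$ in a path, zealots at nodes $1$ and $n+2$ with opinions $-(n+1)/2$ and $(n+1)/2$, and persuadable nodes $2,\ldots,n+1$; let $\bar{\mathbf{x}}$ be the harmonic state $\bar x_k=k-\frac{n+3}{2}$. Let $y$ be the unique negative real solution of $e^{y-2}=y^2/4$. Then: (1) If $\delta\in[0,1]$, there exists $\gamma_c>0$ such that $\bar{\mathbf{x}}$ is linearly stable for all $\gamma\in[0,\gamma_c)$ and linearly unstable for all $\gamma>\gamma_c$; moreover $\gamma_c=1$ when $\delta=1$. (2) If $\delta\in(1,1-y)$, there exist $\gamma_1,\gamma_2>0$ such that $\bar{\mathbf{x}}$ is linearly unstable if and only if $\gamma\in(\gamma_1,\gamma_2)$, and is linearly stable if $\gamma<\gamma_1$ or $\gamma>\gamma_2$. (3) If $\delta>1-y$, then $\bar{\mathbf{x}}$ is linearly stable for all $\gamma>0$.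
   Context: The SBCM with parameters $\gamma,\delta\ge0$ on a graph with zealots $\mathcal{Z}$ and persuadable nodes $\mathcal{P}$: with $w(x_i,x_j)=\frac{1}{1+e^{\gamma(x_i-x_j)^2-\gamma\delta}}$ for adjacent $i\sim j$ and $0$ otherwise, the dynamics are $\frac{dx_i}{dt}=f_i(\mathbf{x})=\frac{\sum_j w(x_i,x_j)(x_j-x_i)}{\sum_j w(x_i,x_j)}$ for $i\in\mathcal{P}$ and $\frac{dx_i}{dt}=0$ for zealots. The state $\bar{\mathbf{x}}$ is a steady state for every $\gamma$. A steady state is linearly stable if all eigenvalues of $\mathbf{J}_{\mathcal{P}}=(\partial f_i/\partial x_j)_{i,j\in\mathcal{P}}$ at it are strictly negative, and linearly unstable if $\mathbf{J}_{\mathcal{P}}$ has a strictly positive eigenvalue. *)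

theory Defs
  imports "HOL-Analysis.Derivative" "Jordan_Normal_Form.Char_Poly"
begin

definition sbcm_w :: "real \<Rightarrow> real \<Rightarrow> real \<Rightarrow> real \<Rightarrow> real" where
  "sbcm_w \<gamma> \<delta> a b = 1 / (1 + exp (\<gamma> * (a - b)^2 - \<gamma> * \<delta>))"

definition sbcm_weight :: "(nat \<Rightarrow> nat \<Rightarrow> bool) \<Rightarrow> real \<Rightarrow> real \<Rightarrow> (nat \<Rightarrow> real) \<Rightarrow> nat \<Rightarrow> nat \<Rightarrow> real" where
  "sbcm_weight adj \<gamma> \<delta> x i j = (if adj i j then sbcm_w \<gamma> \<delta> (x i) (x j) else 0)"

definition sbcm_f :: "nat set \<Rightarrow> (nat \<Rightarrow> nat \<Rightarrow> bool) \<Rightarrow> real \<Rightarrow> real \<Rightarrow> nat \<Rightarrow> (nat \<Rightarrow> real) \<Rightarrow> real" where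
  "sbcm_f V adj \<gamma> \<delta> i x =
     (\<Sum>j\<in>V. sbcm_weight adj \<gamma> \<delta> x i j * (x j - x i)) / (\<Sum>j\<in>V. sbcm_weight adj \<gamma> \<delta> x i j)"

definition sbcm_partial :: "nat set \<Rightarrow> (nat \<Rightarrow> nat \<Rightarrow> bool) \<Rightarrow> real \<Rightarrow> real \<Rightarrow> nat \<Rightarrow> nat \<Rightarrow> (nat \<Rightarrow> real) \<Rightarrow> real" where
  "sbcm_partial V adj \<gamma> \<delta> i j x = deriv (\<lambda>t. sbcm_f V adj \<gamma> \<delta> i (x(j := t))) (x j)"

text \<open>Path graph P_n: nodes 1..n+2, i ~ j iff |i - j| = 1; zealots 1 and n+2,
  persuadable nodes 2..n+1.\<close>
definition path_nodes :: "nat \<Rightarrow> nat set" where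
  "path_nodes n = {1..n+2}"

definition path_adj :: "nat \<Rightarrow> nat \<Rightarrow> bool" where
  "path_adj i j \<longleftrightarrow> i = j + 1 \<or> j = i + 1"

definition harmonic_state :: "nat \<Rightarrow> nat \<Rightarrow> real" where
  "harmonic_state n k = real k - (real n + 3) / 2"

text \<open>Jacobian J_P restricted to persuadable nodes; matrix index p (0-based)
  corresponds to node p+2.\<close>
definition path_jacobian :: "nat \<Rightarrow> real \<Rightarrow> real \<Rightarrow> real mat" where
  "path_jacobian n \<gamma> \<delta> = mat n n (\<lambda>(p, q).
      sbcm_partial (path_nodes n) path_adj \<gamma> \<delta> (p + 2) (q + 2) (harmonic_state n))"

definition lin_stable :: "real mat \<Rightarrow> bool" where
  "lin_stable J \<longleftrightarrow> (\<forall>c. eigenvalue (map_mat complex_of_real J) c \<longrightarrow> Im c = 0 \<and> Re c < 0)"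

definition lin_unstable :: "real mat \<Rightarrow> bool" where
  "lin_unstable J \<longleftrightarrow> (\<exists>r::real. r > 0 \<and> eigenvalue J r)"

end

theory Submission
  imports Defs
begin

(*
  At the harmonic state every persuadable node has its two neighbours at distance exactly 1,
  on opposite sides, so the Jacobian is a(\<gamma>, \<delta>) L, where L is the Dirichlet
  second-difference matrix and a = 1/2 - \<gamma> E / (1 + E) with E = exp (\<gamma> (1 - \<delta>)).
  Summation by parts gives v* L v = - \<Sum>|v_(k+1) - v_k|\<^sup>2 for v padded with zeros, so all
  eigenvalues of L are real and negative; the sine vector v_k = sin (k \<pi> / (n + 1)) is an
  eigenvector. Hence the harmonic state is linearly stable when a > 0 and linearly unstable
  exactly when a < 0, i.e. when g(\<gamma>) = (2 \<gamma> - 1) exp ((1 - \<delta>) \<gamma>) > 1.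
  For \<delta> \<le> 1 the function g increases on [1/2, \<infinity>) and crosses 1 once. For \<delta> = 1 + c > 1
  it is unimodal with maximum (2 / c) exp (- c / 2 - 1) at \<gamma> = 1/2 + 1/c, and this maximum
  exceeds 1 iff c\<^sup>2 / 4 < exp (- c - 2), i.e. iff c < - y.
*)

section \<open>Spectrum of the scaled Dirichlet Laplacian\<close>

lemma eigenvalue_smult_mat:
  assumes "A \<in> carrier_mat n n" "eigenvalue A c"
  shows "eigenvalue (b \<cdot>\<^sub>m A) (b * c)"
proof -
  obtain v where v: "v \<in> carrier_vec n" "v \<noteq> 0\<^sub>v n" "A *\<^sub>v v = c \<cdot>\<^sub>v v"
    using assms unfolding eigenvalue_def eigenvector_def by auto
  have "(b \<cdot>\<^sub>m A) *\<^sub>v v = b \<cdot>\<^sub>v (A *\<^sub>v v)"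
    using assms(1) v(1) by (intro eq_vecI) (auto simp: scalar_prod_def sum_distrib_left ac_simps)
  then show ?thesis
    using assms(1) v unfolding eigenvalue_def eigenvector_def
    by (auto simp: smult_smult_assoc)
qed

lemma eigenvalue_smult_mat_iff:
  fixes b :: "'a::field"
  assumes "A \<in> carrier_mat n n" "b \<noteq> 0"
  shows "eigenvalue (b \<cdot>\<^sub>m A) c \<longleftrightarrow> eigenvalue A (c / b)"
proof
  assume "eigenvalue (b \<cdot>\<^sub>m A) c"
  then have "eigenvalue (inverse b \<cdot>\<^sub>m (b \<cdot>\<^sub>m A)) (inverse b * c)"
    using assms(1) by (intro eigenvalue_smult_mat) auto
  moreover have "inverse b \<cdot>\<^sub>m (b \<cdot>\<^sub>m A) = A"
    using assms by (intro eq_matI) auto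
  ultimately show "eigenvalue A (c / b)"
    by (simp add: divide_inverse ac_simps)
next
  assume "eigenvalue A (c / b)"
  from eigenvalue_smult_mat[OF assms(1) this, of b] show "eigenvalue (b \<cdot>\<^sub>m A) c"
    using assms(2) by simp
qed

lemma eigenvalue_zero_smult_mat:
  fixes A :: "'a::field mat"
  assumes "A \<in> carrier_mat n n" "eigenvalue (0 \<cdot>\<^sub>m A) c"
  shows "c = 0"
proof -
  obtain v where v: "v \<in> carrier_vec n" "v \<noteq> 0\<^sub>v n" "(0 \<cdot>\<^sub>m A) *\<^sub>v v = c \<cdot>\<^sub>v v"
    using assms unfolding eigenvalue_def eigenvector_def by auto
  obtain p where "p < n" "v $ p \<noteq> 0"
    using v(1,2) by (metis eq_vecI carrier_vecD index_zero_vec)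
  moreover have "((0 \<cdot>\<^sub>m A) *\<^sub>v v) $ p = 0"
    using assms(1) v(1) \<open>p < n\<close> by (simp add: scalar_prod_def)
  ultimately show ?thesis
    using v(1,3) by simp
qed

definition dirichlet_laplacian :: "nat \<Rightarrow> 'a::comm_ring_1 mat" where
  "dirichlet_laplacian n =
     mat n n (\<lambda>(p, q). if p = q then -2 else if p = q + 1 \<or> q = p + 1 then 1 else 0)"

lemma dirichlet_laplacian_carrier [simp]: "dirichlet_laplacian n \<in> carrier_mat n n"
  unfolding dirichlet_laplacian_def by simp

lemma map_mat_of_real_dirichlet_laplacian:
  "map_mat of_real (dirichlet_laplacian n) = (dirichlet_laplacian n :: 'a::{real_algebra_1,comm_ring_1} mat)"
  by (rule eq_matI) (auto simp: dirichlet_laplacian_def)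

lemma map_mat_of_real_smult_dirichlet_laplacian:
  "map_mat complex_of_real (a \<cdot>\<^sub>m dirichlet_laplacian n) = of_real a \<cdot>\<^sub>m dirichlet_laplacian n"
  by (rule eq_matI) (auto simp: dirichlet_laplacian_def)

lemma dirichlet_laplacian_mult_vec:
  assumes "w 0 = 0" "w (Suc n) = 0" "p < n"
  shows "(dirichlet_laplacian n *\<^sub>v vec n (\<lambda>q. w (Suc q))) $ p = w p - 2 * w (Suc p) + w (Suc (Suc p))"
proof -
  have "(dirichlet_laplacian n *\<^sub>v vec n (\<lambda>q. w (Suc q))) $ p =
          (\<Sum>q<n. (if q = p then - 2 * w (Suc p) else 0) + (if p = 0 then 0 else if q = p - 1 then w p else 0)
                  + (if q = Suc p then w (Suc (Suc p)) else 0))"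
    using assms(3) unfolding dirichlet_laplacian_def
    by (auto simp: scalar_prod_def lessThan_atLeast0 intro!: sum.cong)
  also have "\<dots> = - 2 * w (Suc p) + (if p = 0 then 0 else w p) + (if Suc p < n then w (Suc (Suc p)) else 0)"
    using assms(3) by (auto simp: sum.distrib)
  finally show ?thesis
    using assms by (cases "Suc p = n") auto
qed

lemma sum_cnj_second_difference:
  fixes w :: "nat \<Rightarrow> complex"
  shows "(\<Sum>p<n. cnj (w (Suc p)) * (w p - 2 * w (Suc p) + w (Suc (Suc p)))) =
           cnj (w (Suc n)) * (w (Suc n) - w n) - cnj (w 0) * (w 1 - w 0)
           - (\<Sum>p\<le>n. cnj (w (Suc p) - w p) * (w (Suc p) - w p))"
  by (induction n) (simp_all add: algebra_simps)

lemma sum_norm_diff_pos: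
  fixes w :: "nat \<Rightarrow> 'a::real_normed_vector"
  assumes "w 0 = 0" "k \<le> n" "w (Suc k) \<noteq> 0"
  shows "(\<Sum>p\<le>n. (norm (w (Suc p) - w p))\<^sup>2) > 0"
proof (rule ccontr)
  assume "\<not> (\<Sum>p\<le>n. (norm (w (Suc p) - w p))\<^sup>2) > 0"
  then have "(\<Sum>p\<le>n. (norm (w (Suc p) - w p))\<^sup>2) = 0"
    by (simp add: sum_nonneg order.antisym)
  then have "w (Suc p) = w p" if "p \<le> n" for p
    using that by (simp add: sum_nonneg_eq_0_iff)
  then have "w j = 0" if "j \<le> Suc n" for j
    using that by (induction j) (simp_all add: assms(1))
  with assms(2,3) show False
    by simp
qed

lemma dirichlet_laplacian_eigenvalue_complex:
  assumes "eigenvalue (dirichlet_laplacian n) (c :: complex)"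
  shows "Im c = 0 \<and> Re c < 0"
proof -
  obtain v where v: "v \<in> carrier_vec n" "v \<noteq> 0\<^sub>v n" "dirichlet_laplacian n *\<^sub>v v = c \<cdot>\<^sub>v v"
    using assms unfolding eigenvalue_def eigenvector_def by (auto simp: dirichlet_laplacian_def)
  define w where "w k = (if 0 < k \<and> k \<le> n then v $ (k - 1) else 0)" for k
  have w_boundary: "w 0 = 0" "w (Suc n) = 0"
    unfolding w_def by simp_all
  have "v = vec n (\<lambda>q. w (Suc q))"
    using v(1) by (intro eq_vecI) (auto simp: w_def)
  then have eig: "w p - 2 * w (Suc p) + w (Suc (Suc p)) = c * w (Suc p)" if "p < n" for p
    using arg_cong[OF v(3), of "\<lambda>u. u $ p"] dirichlet_laplacian_mult_vec[OF w_boundary that] that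
    by simp
  define N where "N = (\<Sum>p<n. (cmod (w (Suc p)))\<^sup>2)"
  define D where "D = (\<Sum>p\<le>n. (cmod (w (Suc p) - w p))\<^sup>2)"
  have cnj_mult_self: "cnj z * z = of_real ((cmod z)\<^sup>2)" for z
    by (metis complex_norm_square mult.commute)
  have "c * of_real N = c * (\<Sum>p<n. cnj (w (Suc p)) * w (Suc p))"
    unfolding N_def cnj_mult_self of_real_sum ..
  also have "\<dots> = (\<Sum>p<n. cnj (w (Suc p)) * (c * w (Suc p)))"
    by (simp add: sum_distrib_left ac_simps)
  also have "\<dots> = (\<Sum>p<n. cnj (w (Suc p)) * (w p - 2 * w (Suc p) + w (Suc (Suc p))))"
    by (simp add: eig)
  also have "\<dots> = - of_real D"
    unfolding sum_cnj_second_difference D_def cnj_mult_self of_real_sum by (simp add: w_boundary)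
  finally have cND: "c * of_real N = - of_real D" .
  obtain p where p: "p < n" "v $ p \<noteq> 0"
    using v(1,2) by (metis eq_vecI carrier_vecD index_zero_vec)
  have "(cmod (w (Suc p)))\<^sup>2 > 0"
    using p by (simp add: w_def)
  then have "N > 0"
    unfolding N_def using p(1) by (intro sum_pos2[of _ p]) auto
  have "D > 0"
    unfolding D_def using p by (intro sum_norm_diff_pos[of w p n] w_boundary) (auto simp: w_def)
  have "c = of_real (- D / N)"
    using cND \<open>N > 0\<close> by (simp add: field_simps)
  then show ?thesis
    using \<open>N > 0\<close> \<open>D > 0\<close> by (simp add: divide_pos_pos)
qed

lemma dirichlet_laplacian_eigenvalue_real:
  assumes "eigenvalue (dirichlet_laplacian n) (r :: real)"
  shows "r < 0"
  using dirichlet_laplacian_eigenvalue_complex[of n "of_real r"]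
    of_real_hom.eigenvalue_hom[OF dirichlet_laplacian_carrier assms]
  by (simp add: map_mat_of_real_dirichlet_laplacian)

lemma dirichlet_laplacian_sine_eigenvalue:
  assumes "n \<ge> 1"
  shows "eigenvalue (dirichlet_laplacian n) (2 * cos (pi / (n + 1)) - 2)"
proof -
  define t where "t = pi / (n + 1)"
  define w where "w k = sin (k * t)" for k :: nat
  have w_boundary: "w 0 = 0" "w (Suc n) = 0"
    unfolding w_def t_def by simp_all
  define v where "v = vec n (\<lambda>q. w (Suc q))"
  have "0 < t" "t < pi"
    using assms unfolding t_def by (auto simp: field_simps)
  then have "v $ 0 \<noteq> 0"
    using assms sin_gt_zero unfolding v_def w_def by force
  then have "v \<noteq> 0\<^sub>v n"
    using assms by auto
  moreover have "dirichlet_laplacian n *\<^sub>v v = (2 * cos t - 2) \<cdot>\<^sub>v v"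
  proof (rule eq_vecI)
    fix p assume "p < dim_vec ((2 * cos t - 2) \<cdot>\<^sub>v v)"
    then have "p < n" unfolding v_def by simp
    have "sin (p * t) + sin ((p + 2) * t) = 2 * cos t * sin ((p + 1) * t)"
      using sin_add[of "(p + 1) * t" t] sin_diff[of "(p + 1) * t" t] by (simp add: algebra_simps)
    then show "(dirichlet_laplacian n *\<^sub>v v) $ p = ((2 * cos t - 2) \<cdot>\<^sub>v v) $ p"
      using \<open>p < n\<close> unfolding v_def dirichlet_laplacian_mult_vec[OF w_boundary \<open>p < n\<close>]
      by (simp add: w_def algebra_simps)
  qed (simp add: v_def dirichlet_laplacian_def)
  ultimately have "eigenvector (dirichlet_laplacian n) v (2 * cos t - 2)"
    unfolding eigenvector_def v_def by (simp add: dirichlet_laplacian_def)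
  then show ?thesis
    unfolding eigenvalue_def t_def by blast
qed

lemma lin_stable_smult_dirichlet_laplacian:
  assumes "a > 0"
  shows "lin_stable (a \<cdot>\<^sub>m dirichlet_laplacian n)"
  unfolding lin_stable_def map_mat_of_real_smult_dirichlet_laplacian
proof (intro allI impI)
  fix c assume "eigenvalue (complex_of_real a \<cdot>\<^sub>m dirichlet_laplacian n) c"
  then have "eigenvalue (dirichlet_laplacian n) (c / of_real a)"
    using assms by (subst (asm) eigenvalue_smult_mat_iff[OF dirichlet_laplacian_carrier]) auto
  then have "Im (c / of_real a) = 0 \<and> Re (c / of_real a) < 0"
    by (rule dirichlet_laplacian_eigenvalue_complex)
  then show "Im c = 0 \<and> Re c < 0"
    using assms by (simp add: Im_divide_of_real Re_divide_of_real divide_less_0_iff)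
qed

lemma not_lin_unstable_smult_dirichlet_laplacian:
  assumes "a \<ge> 0"
  shows "\<not> lin_unstable (a \<cdot>\<^sub>m dirichlet_laplacian n)"
proof
  assume "lin_unstable (a \<cdot>\<^sub>m dirichlet_laplacian n)"
  then obtain r where r: "r > 0" "eigenvalue (a \<cdot>\<^sub>m dirichlet_laplacian n) r"
    unfolding lin_unstable_def by blast
  show False
  proof (cases "a = 0")
    case True
    then show False
      using eigenvalue_zero_smult_mat[OF dirichlet_laplacian_carrier] r by fastforce
  next
    case False
    then have "eigenvalue (dirichlet_laplacian n) (r / a)"
      using r(2) by (subst (asm) eigenvalue_smult_mat_iff[OF dirichlet_laplacian_carrier]) auto
    then show False
      using dirichlet_laplacian_eigenvalue_real assms r(1) False by (fastforce simp: divide_less_0_iff)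
  qed
qed

lemma lin_unstable_smult_dirichlet_laplacian:
  assumes "a < 0" "n \<ge> 1"
  shows "lin_unstable (a \<cdot>\<^sub>m dirichlet_laplacian n)"
proof -
  have "0 < pi / (n + 1)" "pi / (n + 1) < pi"
    using assms(2) by (auto simp: field_simps)
  then have "cos (pi / (n + 1)) < cos 0"
    by (intro cos_monotone_0_pi) auto
  then have "a * (2 * cos (pi / (n + 1)) - 2) > 0"
    using assms(1) by (simp add: mult_neg_neg)
  moreover have "eigenvalue (a \<cdot>\<^sub>m dirichlet_laplacian n) (a * (2 * cos (pi / (n + 1)) - 2))"
    by (rule eigenvalue_smult_mat[OF dirichlet_laplacian_carrier dirichlet_laplacian_sine_eigenvalue[OF assms(2)]])
  ultimately show ?thesis
    unfolding lin_unstable_def by blast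
qed

section \<open>Linearisation at the harmonic state\<close>

definition sbcm_kernel :: "real \<Rightarrow> real \<Rightarrow> real \<Rightarrow> real" where
  "sbcm_kernel \<gamma> \<delta> s = 1 / (1 + exp (\<gamma> * s\<^sup>2 - \<gamma> * \<delta>))"

lemma sbcm_w_eq_kernel: "sbcm_w \<gamma> \<delta> a b = sbcm_kernel \<gamma> \<delta> (b - a)"
  unfolding sbcm_w_def sbcm_kernel_def by (simp add: power2_commute)

lemma sbcm_kernel_pos: "sbcm_kernel \<gamma> \<delta> s > 0"
  unfolding sbcm_kernel_def by (simp add: add_pos_pos)

lemma sbcm_kernel_has_real_derivative [derivative_intros]:
  assumes "(f has_real_derivative f') (at x)"
  shows "((\<lambda>x. sbcm_kernel \<gamma> \<delta> (f x)) has_real_derivative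
      - 2 * \<gamma> * f x * f' * exp (\<gamma> * (f x)\<^sup>2 - \<gamma> * \<delta>) * (sbcm_kernel \<gamma> \<delta> (f x))\<^sup>2) (at x)"
proof -
  have "1 + exp (\<gamma> * (f x)\<^sup>2 - \<gamma> * \<delta>) > 0"
    by (simp add: add_pos_pos)
  then show ?thesis
    unfolding sbcm_kernel_def
    by (auto intro!: derivative_eq_intros assms simp: power2_eq_square field_simps)
qed

definition neighbour_average :: "real \<Rightarrow> real \<Rightarrow> real \<Rightarrow> real \<Rightarrow> real" where
  "neighbour_average \<gamma> \<delta> s1 s2 =
     (sbcm_kernel \<gamma> \<delta> s1 * s1 + sbcm_kernel \<gamma> \<delta> s2 * s2) / (sbcm_kernel \<gamma> \<delta> s1 + sbcm_kernel \<gamma> \<delta> s2)"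

definition jacobian_coeff :: "real \<Rightarrow> real \<Rightarrow> real" where
  "jacobian_coeff \<gamma> \<delta> = 1/2 - \<gamma> * exp (\<gamma> - \<gamma> * \<delta>) / (1 + exp (\<gamma> - \<gamma> * \<delta>))"

lemma neighbour_average_has_derivative_at_unit_gaps:
  assumes "(s1 has_real_derivative u1) (at t)" "(s2 has_real_derivative u2) (at t)"
    and "s1 t = -1" "s2 t = 1"
  shows "((\<lambda>t. neighbour_average \<gamma> \<delta> (s1 t) (s2 t)) has_real_derivative
           jacobian_coeff \<gamma> \<delta> * (u1 + u2)) (at t)"
proof -
  define E where "E = exp (\<gamma> - \<gamma> * \<delta>)"
  define w where "w = 1 / (1 + E)"
  have "w > 0"
    unfolding w_def E_def by (simp add: add_pos_pos)
  have K: "sbcm_kernel \<gamma> \<delta> (-1) = w" "sbcm_kernel \<gamma> \<delta> 1 = w"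
    unfolding sbcm_kernel_def w_def E_def by simp_all
  have X: "exp (\<gamma> * (-1)\<^sup>2 - \<gamma> * \<delta>) = E" "exp (\<gamma> * 1\<^sup>2 - \<gamma> * \<delta>) = E"
    unfolding E_def by simp_all
  have C: "jacobian_coeff \<gamma> \<delta> = 1/2 - \<gamma> * E * w"
    unfolding jacobian_coeff_def w_def E_def by simp
  show ?thesis
    unfolding neighbour_average_def
    apply (rule derivative_eq_intros assms(1,2) refl | simp add: add_pos_pos sbcm_kernel_pos)+
    apply (simp_all only: assms(3,4) K X C)
    using \<open>w > 0\<close> by (simp_all add: field_simps power2_eq_square)
qed

lemma sum_path_neighbours:
  assumes "2 \<le> i" "i \<le> n + 1"
  shows "(\<Sum>j\<in>path_nodes n. if path_adj i j then F j else 0) = F (i - 1) + F (i + 1)"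
proof -
  have "(\<Sum>j\<in>path_nodes n. if path_adj i j then F j else 0) = sum F {j \<in> path_nodes n. path_adj i j}"
    by (rule sum.inter_filter[symmetric]) (simp add: path_nodes_def)
  also have "{j \<in> path_nodes n. path_adj i j} = {i - 1, i + 1}"
    using assms unfolding path_nodes_def path_adj_def by auto
  finally show ?thesis
    using assms by simp
qed

lemma sbcm_f_path:
  assumes "2 \<le> i" "i \<le> n + 1"
  shows "sbcm_f (path_nodes n) path_adj \<gamma> \<delta> i x =
           neighbour_average \<gamma> \<delta> (x (i - 1) - x i) (x (i + 1) - x i)"
proof -
  let ?K = "\<lambda>j. sbcm_kernel \<gamma> \<delta> (x j - x i)"
  have "(\<Sum>j\<in>path_nodes n. sbcm_weight path_adj \<gamma> \<delta> x i j * (x j - x i)) =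
          (\<Sum>j\<in>path_nodes n. if path_adj i j then ?K j * (x j - x i) else 0)"
   and "(\<Sum>j\<in>path_nodes n. sbcm_weight path_adj \<gamma> \<delta> x i j) =
          (\<Sum>j\<in>path_nodes n. if path_adj i j then ?K j else 0)"
    by (auto intro!: sum.cong simp: sbcm_weight_def sbcm_w_eq_kernel)
  then show ?thesis
    unfolding sbcm_f_def neighbour_average_def sum_path_neighbours[OF assms] by simp
qed

lemma fun_upd_has_real_derivative:
  "((\<lambda>t. (x(j := t)) k) has_real_derivative (if k = j then 1 else 0)) (at t)"
  by (cases "k = j") auto

lemma sbcm_partial_harmonic_state:
  assumes "p < n" "q < n"
  shows "sbcm_partial (path_nodes n) path_adj \<gamma> \<delta> (p + 2) (q + 2) (harmonic_state n) =
           jacobian_coeff \<gamma> \<delta> * dirichlet_laplacian n $$ (p, q)"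
proof -
  let ?x = "harmonic_state n"
  let ?y = "\<lambda>t. ?x(q + 2 := t)"
  let ?e = "\<lambda>k. if k = q + 2 then 1 else 0 :: real"
  have f: "sbcm_f (path_nodes n) path_adj \<gamma> \<delta> (p + 2) (?y t) =
             neighbour_average \<gamma> \<delta> (?y t (p + 1) - ?y t (p + 2)) (?y t (p + 3) - ?y t (p + 2))" for t
    using sbcm_f_path[of "p + 2" n] assms by (simp add: numeral_3_eq_3)
  have "((\<lambda>t. sbcm_f (path_nodes n) path_adj \<gamma> \<delta> (p + 2) (?y t)) has_real_derivative
          jacobian_coeff \<gamma> \<delta> * ((?e (p + 1) - ?e (p + 2)) + (?e (p + 3) - ?e (p + 2)))) (at (?x (q + 2)))"
    unfolding f
    by (rule neighbour_average_has_derivative_at_unit_gaps)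
      (auto intro!: derivative_eq_intros fun_upd_has_real_derivative simp: harmonic_state_def)
  then have "sbcm_partial (path_nodes n) path_adj \<gamma> \<delta> (p + 2) (q + 2) ?x =
               jacobian_coeff \<gamma> \<delta> * ((?e (p + 1) - ?e (p + 2)) + (?e (p + 3) - ?e (p + 2)))"
    unfolding sbcm_partial_def by (rule DERIV_imp_deriv)
  then show ?thesis
    using assms by (auto simp: dirichlet_laplacian_def)
qed

lemma path_jacobian_eq: "path_jacobian n \<gamma> \<delta> = jacobian_coeff \<gamma> \<delta> \<cdot>\<^sub>m dirichlet_laplacian n"
  by (rule eq_matI)
    (auto simp: path_jacobian_def sbcm_partial_harmonic_state[simplified] dirichlet_laplacian_def)

section \<open>The stability index\<close>

definition stability_index :: "real \<Rightarrow> real \<Rightarrow> real" where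
  "stability_index k \<gamma> = (2 * \<gamma> - 1) * exp (k * \<gamma>)"

lemma stability_index_nonpos: "\<gamma> \<le> 1/2 \<Longrightarrow> stability_index k \<gamma> \<le> 0"
  unfolding stability_index_def by (simp add: mult_nonpos_nonneg)

lemma continuous_on_stability_index: "continuous_on S (stability_index k)"
  unfolding stability_index_def by (intro continuous_intros)

lemma stability_index_has_real_derivative:
  "(stability_index k has_real_derivative exp (k * \<gamma>) * (2 + k * (2 * \<gamma> - 1))) (at \<gamma>)"
  unfolding stability_index_def
  by (rule derivative_eq_intros refl)+ (simp add: algebra_simps)

lemma stability_index_strict_mono:
  assumes "k \<ge> 0" "1/2 \<le> \<gamma>" "\<gamma> < \<gamma>'"
  shows "stability_index k \<gamma> < stability_index k \<gamma>'"
proof -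
  have "(2 * \<gamma> - 1) * exp (k * \<gamma>) \<le> (2 * \<gamma> - 1) * exp (k * \<gamma>')"
    using assms by (intro mult_left_mono) (auto intro: mult_left_mono)
  also have "\<dots> < (2 * \<gamma>' - 1) * exp (k * \<gamma>')"
    using assms by simp
  finally show ?thesis
    unfolding stability_index_def .
qed

lemma stability_index_increasing_before_peak:
  assumes "c > 0" "1/2 \<le> \<gamma>" "\<gamma> < \<gamma>'" "\<gamma>' \<le> 1/2 + 1/c"
  shows "stability_index (-c) \<gamma> < stability_index (-c) \<gamma>'"
proof (rule DERIV_pos_imp_increasing_open[OF assms(3) _ continuous_on_stability_index])
  fix z assume "\<gamma> < z" "z < \<gamma>'"
  have "c * (2 * z - 1) < c * (2 * \<gamma>' - 1)"
    using assms \<open>z < \<gamma>'\<close> by simp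
  also have "\<dots> \<le> 2"
    using assms by (simp add: field_simps)
  finally have "c * (2 * z - 1) < 2" .
  then show "\<exists>d. (stability_index (-c) has_real_derivative d) (at z) \<and> d > 0"
    using stability_index_has_real_derivative by fastforce
qed

lemma stability_index_decreasing_after_peak:
  assumes "c > 0" "1/2 + 1/c \<le> \<gamma>" "\<gamma> < \<gamma>'"
  shows "stability_index (-c) \<gamma>' < stability_index (-c) \<gamma>"
proof (rule DERIV_neg_imp_decreasing_open[OF assms(3) _ continuous_on_stability_index])
  fix z assume "\<gamma> < z" "z < \<gamma>'"
  have "2 \<le> c * (2 * \<gamma> - 1)"
    using assms by (simp add: field_simps)
  also have "\<dots> < c * (2 * z - 1)"
    using assms \<open>\<gamma> < z\<close> by simp
  finally have "c * (2 * z - 1) > 2" .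
  then show "\<exists>d. (stability_index (-c) has_real_derivative d) (at z) \<and> d < 0"
    using stability_index_has_real_derivative by (fastforce simp: mult_pos_neg)
qed

lemma stability_index_le_peak:
  assumes "c > 0"
  shows "stability_index (-c) \<gamma> \<le> stability_index (-c) (1/2 + 1/c)"
proof -
  consider "\<gamma> \<le> 1/2" | "1/2 < \<gamma>" "\<gamma> < 1/2 + 1/c" | "1/2 + 1/c \<le> \<gamma>"
    by linarith
  then show ?thesis
  proof cases
    case 1
    moreover have "stability_index (-c) (1/2 + 1/c) > 0"
      using assms unfolding stability_index_def by simp
    ultimately show ?thesis
      using stability_index_nonpos[OF 1, of "-c"] by linarith
  next
    case 2
    then show ?thesis
      using stability_index_increasing_before_peak[OF assms, of \<gamma> "1/2 + 1/c"] by simp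
  next
    case 3
    then show ?thesis
      using stability_index_decreasing_after_peak[OF assms, of "1/2 + 1/c" \<gamma>] by fastforce
  qed
qed

lemma stability_index_peak_value:
  assumes "c > 0"
  shows "stability_index (-c) (1/2 + 1/c) = 2 / c * exp (- c/2 - 1)"
  unfolding stability_index_def using assms by (simp add: field_simps)

lemma stability_index_eventually_lt_one:
  assumes "c > 0" "\<gamma> > 0" "\<gamma> \<ge> 8 / c\<^sup>2"
  shows "stability_index (-c) \<gamma> < 1"
proof -
  have "c * \<gamma> / 2 < exp (c * \<gamma> / 2)"
    using exp_ge_add_one_self[of "c * \<gamma> / 2"] by linarith
  then have "(c * \<gamma> / 2)\<^sup>2 < (exp (c * \<gamma> / 2))\<^sup>2"
    using assms by (intro power_strict_mono) auto
  also have "\<dots> = exp (c * \<gamma>)"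
    by (simp flip: exp_double)
  finally have "(c * \<gamma>)\<^sup>2 / 4 < exp (c * \<gamma>)"
    by (simp add: power_divide)
  moreover have "2 * \<gamma> \<le> (c * \<gamma>)\<^sup>2 / 4"
    using assms by (simp add: field_simps power2_eq_square)
  ultimately have "(2 * \<gamma> - 1) * exp (- c * \<gamma>) < exp (c * \<gamma>) * exp (- c * \<gamma>)"
    by (intro mult_strict_right_mono) auto
  then show ?thesis
    unfolding stability_index_def by (simp flip: exp_add)
qed

lemma stability_index_threshold:
  assumes "k \<ge> 0"
  shows "\<exists>\<gamma>c > 0. (\<forall>\<gamma> < \<gamma>c. stability_index k \<gamma> < 1) \<and> (\<forall>\<gamma> > \<gamma>c. stability_index k \<gamma> > 1)
                  \<and> (k = 0 \<longrightarrow> \<gamma>c = 1)"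
proof -
  have "stability_index k (1/2) \<le> 1" "1 \<le> stability_index k 1"
    using assms unfolding stability_index_def by simp_all
  then obtain \<gamma>c where \<gamma>c: "1/2 \<le> \<gamma>c" "stability_index k \<gamma>c = 1"
    using IVT'[of "stability_index k" "1/2" 1 1] continuous_on_stability_index by auto
  have "stability_index k \<gamma> < 1" if "\<gamma> < \<gamma>c" for \<gamma>
  proof (cases "\<gamma> \<le> 1/2")
    case True
    then show ?thesis using stability_index_nonpos[of \<gamma> k] by simp
  next
    case False
    then show ?thesis using stability_index_strict_mono[OF assms _ that] \<gamma>c by simp
  qed
  moreover have "stability_index k \<gamma> > 1" if "\<gamma> > \<gamma>c" for \<gamma>
    using stability_index_strict_mono[OF assms \<gamma>c(1) that] \<gamma>c by simp
  moreover have "\<gamma>c = 1" if "k = 0"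
    using \<gamma>c(2) that unfolding stability_index_def by simp
  moreover have "\<gamma>c > 0"
    using \<gamma>c(1) by simp
  ultimately show ?thesis
    by blast
qed

lemma stability_index_crossings:
  assumes "c > 0" "stability_index (-c) (1/2 + 1/c) > 1"
  obtains \<gamma>1 \<gamma>2 where "1/2 \<le> \<gamma>1" "\<gamma>1 < 1/2 + 1/c" "1/2 + 1/c < \<gamma>2"
    "stability_index (-c) \<gamma>1 = 1" "stability_index (-c) \<gamma>2 = 1"
proof -
  let ?g = "stability_index (-c)"
  define m where "m = 1/2 + 1/c"
  define T where "T = m + 8 / c\<^sup>2"
  have "1/2 < m" "m < T"
    using assms(1) unfolding m_def T_def by simp_all
  have "?g (1/2) \<le> 1" "?g T < 1"
    using stability_index_eventually_lt_one[OF assms(1), of T] \<open>1/2 < m\<close> \<open>m < T\<close>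
    unfolding stability_index_def T_def by simp_all
  obtain \<gamma>1 where \<gamma>1: "1/2 \<le> \<gamma>1" "\<gamma>1 \<le> m" "?g \<gamma>1 = 1"
    using IVT'[of ?g "1/2" 1 m] \<open>?g (1/2) \<le> 1\<close> \<open>1/2 < m\<close> assms(2) continuous_on_stability_index
    unfolding m_def by fastforce
  obtain \<gamma>2 where \<gamma>2: "m \<le> \<gamma>2" "\<gamma>2 \<le> T" "?g \<gamma>2 = 1"
    using IVT2'[of ?g T 1 m] \<open>?g T < 1\<close> \<open>m < T\<close> assms(2) continuous_on_stability_index
    unfolding m_def by fastforce
  have "\<gamma>1 < m" "m < \<gamma>2"
    using \<gamma>1 \<gamma>2 assms(2) unfolding m_def by (auto simp: order.order_iff_strict)
  with \<gamma>1 \<gamma>2 show ?thesis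
    using that unfolding m_def by blast
qed

lemma stability_index_window:
  assumes "c > 0" "stability_index (-c) (1/2 + 1/c) > 1"
  shows "\<exists>\<gamma>1 \<gamma>2. 0 < \<gamma>1 \<and> \<gamma>1 < \<gamma>2
           \<and> (\<forall>\<gamma>. stability_index (-c) \<gamma> > 1 \<longleftrightarrow> \<gamma>1 < \<gamma> \<and> \<gamma> < \<gamma>2)
           \<and> (\<forall>\<gamma>. \<gamma> < \<gamma>1 \<or> \<gamma> > \<gamma>2 \<longrightarrow> stability_index (-c) \<gamma> < 1)"
proof -
  let ?g = "stability_index (-c)"
  obtain \<gamma>1 \<gamma>2 where \<gamma>1: "1/2 \<le> \<gamma>1" "\<gamma>1 < 1/2 + 1/c" "?g \<gamma>1 = 1"
    and \<gamma>2: "1/2 + 1/c < \<gamma>2" "?g \<gamma>2 = 1"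
    using stability_index_crossings[OF assms] by metis
  have below: "?g \<gamma> < 1" if "\<gamma> < \<gamma>1" for \<gamma>
  proof (cases "\<gamma> \<le> 1/2")
    case True
    then show ?thesis using stability_index_nonpos[of \<gamma> "-c"] by simp
  next
    case False
    then show ?thesis
      using stability_index_increasing_before_peak[OF assms(1), of \<gamma> \<gamma>1] that \<gamma>1 by simp
  qed
  have above: "?g \<gamma> < 1" if "\<gamma> > \<gamma>2" for \<gamma>
    using stability_index_decreasing_after_peak[OF assms(1), of \<gamma>2 \<gamma>] that \<gamma>2 by simp
  have inside: "?g \<gamma> > 1" if "\<gamma>1 < \<gamma>" "\<gamma> < \<gamma>2" for \<gamma>
  proof (cases "\<gamma> \<le> 1/2 + 1/c")
    case True
    then show ?thesis
      using stability_index_increasing_before_peak[OF assms(1), of \<gamma>1 \<gamma>] that \<gamma>1 by simp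
  next
    case False
    then show ?thesis
      using stability_index_decreasing_after_peak[OF assms(1), of \<gamma> \<gamma>2] that \<gamma>2 by simp
  qed
  have "?g \<gamma> > 1 \<longleftrightarrow> \<gamma>1 < \<gamma> \<and> \<gamma> < \<gamma>2" for \<gamma>
    using below above inside \<gamma>1(3) \<gamma>2(2) by (metis less_irrefl not_less_iff_gr_or_eq)
  moreover have "0 < \<gamma>1" "\<gamma>1 < \<gamma>2"
    using \<gamma>1 \<gamma>2 by simp_all
  ultimately show ?thesis
    using below above by blast
qed

lemma stability_index_lt_one:
  assumes "c > 0" "stability_index (-c) (1/2 + 1/c) < 1"
  shows "stability_index (-c) \<gamma> < 1"
  using stability_index_le_peak[OF assms(1), of \<gamma>] assms(2) by simp

lemma stability_index_peak_compare:
  assumes "c > 0"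
  shows "stability_index (-c) (1/2 + 1/c) > 1 \<longleftrightarrow> c\<^sup>2 / 4 < exp (- c - 2)"
    and "stability_index (-c) (1/2 + 1/c) < 1 \<longleftrightarrow> exp (- c - 2) < c\<^sup>2 / 4"
proof -
  define e where "e = exp (- c/2 - 1)"
  have "e \<ge> 0" "c / 2 \<ge> 0"
    using assms unfolding e_def by simp_all
  have e_sq: "exp (- c - 2) = e\<^sup>2"
    unfolding e_def by (simp flip: exp_double)
  have "c\<^sup>2 / 4 = (c / 2)\<^sup>2"
    by (simp add: power_divide)
  moreover have "(c / 2)\<^sup>2 < e\<^sup>2 \<longleftrightarrow> c / 2 < e" "e\<^sup>2 < (c / 2)\<^sup>2 \<longleftrightarrow> e < c / 2"
    using power_mono_iff[OF \<open>e \<ge> 0\<close> \<open>c / 2 \<ge> 0\<close>, of 2] power_mono_iff[OF \<open>c / 2 \<ge> 0\<close> \<open>e \<ge> 0\<close>, of 2]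
    by (simp_all add: not_le[symmetric])
  ultimately show "stability_index (-c) (1/2 + 1/c) > 1 \<longleftrightarrow> c\<^sup>2 / 4 < exp (- c - 2)"
    and "stability_index (-c) (1/2 + 1/c) < 1 \<longleftrightarrow> exp (- c - 2) < c\<^sup>2 / 4"
    using assms unfolding stability_index_peak_value[OF assms] e_sq e_def[symmetric]
    by (simp_all add: field_simps)
qed

lemma stability_index_peak_gt_one:
  assumes "y < 0" "exp (y - 2) = y\<^sup>2 / 4" "0 < c" "c < - y"
  shows "stability_index (-c) (1/2 + 1/c) > 1"
proof -
  have "c\<^sup>2 < (- y)\<^sup>2"
    using assms by (intro power_strict_mono) auto
  then have "c\<^sup>2 / 4 < exp (y - 2)"
    using assms(2) by simp
  also have "\<dots> < exp (- c - 2)"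
    using assms(4) by simp
  finally show ?thesis
    using stability_index_peak_compare(1)[OF assms(3)] by simp
qed

lemma stability_index_peak_lt_one:
  assumes "y < 0" "exp (y - 2) = y\<^sup>2 / 4" "- y < c"
  shows "stability_index (-c) (1/2 + 1/c) < 1"
proof -
  have "exp (- c - 2) < exp (y - 2)"
    using assms(3) by simp
  also have "\<dots> < c\<^sup>2 / 4"
    using assms power_strict_mono[of "- y" c 2] by simp
  finally show ?thesis
    using stability_index_peak_compare(2) assms by simp
qed

lemma jacobian_coeff_eq:
  "jacobian_coeff \<gamma> \<delta> = (1 - stability_index (1 - \<delta>) \<gamma>) / (2 * (1 + exp (\<gamma> - \<gamma> * \<delta>)))"
proof -
  have "exp ((1 - \<delta>) * \<gamma>) = exp (\<gamma> - \<gamma> * \<delta>)"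
    by (simp add: algebra_simps)
  moreover have "1 + exp (\<gamma> - \<gamma> * \<delta>) > 0"
    by (simp add: add_pos_pos)
  ultimately show ?thesis
    unfolding jacobian_coeff_def stability_index_def by (simp add: field_simps)
qed

lemma path_jacobian_stable:
  assumes "stability_index (1 - \<delta>) \<gamma> < 1"
  shows "lin_stable (path_jacobian n \<gamma> \<delta>)"
  unfolding path_jacobian_eq
  by (rule lin_stable_smult_dirichlet_laplacian)
    (use assms in \<open>simp add: jacobian_coeff_eq add_pos_pos\<close>)

lemma path_jacobian_unstable_iff:
  assumes "n \<ge> 1"
  shows "lin_unstable (path_jacobian n \<gamma> \<delta>) \<longleftrightarrow> stability_index (1 - \<delta>) \<gamma> > 1"
proof -
  have "2 * (1 + exp (\<gamma> - \<gamma> * \<delta>)) > 0"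
    by (simp add: add_pos_pos)
  then have "jacobian_coeff \<gamma> \<delta> < 0 \<longleftrightarrow> stability_index (1 - \<delta>) \<gamma> > 1"
    unfolding jacobian_coeff_eq by (simp add: pos_divide_less_eq)
  then show ?thesis
    unfolding path_jacobian_eq
    using lin_unstable_smult_dirichlet_laplacian[OF _ assms] not_lin_unstable_smult_dirichlet_laplacian
    by (meson not_less)
qed

lemma path_jacobian_threshold:
  assumes "n \<ge> 1" "\<delta> \<le> 1"
  shows "\<exists>\<gamma>c > 0. (\<forall>\<gamma>. 0 \<le> \<gamma> \<and> \<gamma> < \<gamma>c \<longrightarrow> lin_stable (path_jacobian n \<gamma> \<delta>))
           \<and> (\<forall>\<gamma>. \<gamma> > \<gamma>c \<longrightarrow> lin_unstable (path_jacobian n \<gamma> \<delta>))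
           \<and> (\<delta> = 1 \<longrightarrow> \<gamma>c = 1)"
proof -
  obtain \<gamma>c where "\<gamma>c > 0" "\<forall>\<gamma> < \<gamma>c. stability_index (1 - \<delta>) \<gamma> < 1"
      "\<forall>\<gamma> > \<gamma>c. stability_index (1 - \<delta>) \<gamma> > 1" "\<delta> = 1 \<longrightarrow> \<gamma>c = 1"
    using stability_index_threshold[of "1 - \<delta>"] assms(2) by auto
  then show ?thesis
    using path_jacobian_stable path_jacobian_unstable_iff[OF assms(1)] by blast
qed

lemma path_jacobian_instability_window:
  assumes "n \<ge> 1" "y < 0" "exp (y - 2) = y\<^sup>2 / 4" "1 < \<delta>" "\<delta> < 1 - y"
  shows "\<exists>\<gamma>1 \<gamma>2. 0 < \<gamma>1 \<and> \<gamma>1 < \<gamma>2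
           \<and> (\<forall>\<gamma>. 0 \<le> \<gamma> \<longrightarrow> (lin_unstable (path_jacobian n \<gamma> \<delta>) \<longleftrightarrow> \<gamma>1 < \<gamma> \<and> \<gamma> < \<gamma>2))
           \<and> (\<forall>\<gamma>. 0 \<le> \<gamma> \<and> (\<gamma> < \<gamma>1 \<or> \<gamma> > \<gamma>2) \<longrightarrow> lin_stable (path_jacobian n \<gamma> \<delta>))"
proof -
  obtain \<gamma>1 \<gamma>2 where "0 < \<gamma>1" "\<gamma>1 < \<gamma>2"
      "\<forall>\<gamma>. stability_index (1 - \<delta>) \<gamma> > 1 \<longleftrightarrow> \<gamma>1 < \<gamma> \<and> \<gamma> < \<gamma>2"
      "\<forall>\<gamma>. \<gamma> < \<gamma>1 \<or> \<gamma> > \<gamma>2 \<longrightarrow> stability_index (1 - \<delta>) \<gamma> < 1"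
    using stability_index_window[of "\<delta> - 1"] stability_index_peak_gt_one[of y "\<delta> - 1"] assms(2-5)
    by auto
  then show ?thesis
    using path_jacobian_stable path_jacobian_unstable_iff[OF assms(1)] by blast
qed

lemma path_jacobian_stable_beyond_window:
  assumes "y < 0" "exp (y - 2) = y\<^sup>2 / 4" "1 - y < \<delta>"
  shows "lin_stable (path_jacobian n \<gamma> \<delta>)"
  using stability_index_lt_one[of "\<delta> - 1"] stability_index_peak_lt_one[of y "\<delta> - 1"] assms
  by (intro path_jacobian_stable) simp

theorem theorem5:
  fixes n :: nat and \<delta> y :: real
  assumes n: "n \<ge> 1"
    and \<delta>: "\<delta> \<ge> 0"
    and y: "y < 0" "exp (y - 2) = y^2 / 4"
  shows
   "(\<delta> \<le> 1 \<longrightarrow>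
      (\<exists>\<gamma>c > 0. (\<forall>\<gamma>. 0 \<le> \<gamma> \<and> \<gamma> < \<gamma>c \<longrightarrow> lin_stable (path_jacobian n \<gamma> \<delta>))
               \<and> (\<forall>\<gamma>. \<gamma> > \<gamma>c \<longrightarrow> lin_unstable (path_jacobian n \<gamma> \<delta>))
               \<and> (\<delta> = 1 \<longrightarrow> \<gamma>c = 1)))
  \<and> (1 < \<delta> \<and> \<delta> < 1 - y \<longrightarrow>
      (\<exists>\<gamma>1 \<gamma>2. 0 < \<gamma>1 \<and> \<gamma>1 < \<gamma>2
         \<and> (\<forall>\<gamma>. 0 \<le> \<gamma> \<longrightarrow> (lin_unstable (path_jacobian n \<gamma> \<delta>) \<longleftrightarrow> \<gamma>1 < \<gamma> \<and> \<gamma> < \<gamma>2))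
         \<and> (\<forall>\<gamma>. 0 \<le> \<gamma> \<and> (\<gamma> < \<gamma>1 \<or> \<gamma> > \<gamma>2) \<longrightarrow> lin_stable (path_jacobian n \<gamma> \<delta>))))
  \<and> (\<delta> > 1 - y \<longrightarrow> (\<forall>\<gamma> > 0. lin_stable (path_jacobian n \<gamma> \<delta>)))"
  by (intro conjI impI allI path_jacobian_threshold[OF n] path_jacobian_instability_window[OF n y]
      path_jacobian_stable_beyond_window[OF y]) auto

end
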